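(* Let $m\ge 2$ and $1\le k\le m$. For $y\in\mathcal{Y}$ and $g\in\mathbb{R}^m$ define the truncated top-$k$ entropy loss $$L(y,g)=\log\Big(1+\sum_{j\in\mathcal{J}_y(g)}\exp(g_j-g_y)\Big),$$ where $\mathcal{J}_y(g)$ is a set of indices of $m-k$ smallest components of $(g_j)_{j\ne y}$ (the value of $L$ does not depend on how ties are broken). Then $L$ is top-$s$ calibrated for every $s$ with $k\le s\le m$.
   Context: Classes $\mathcal{Y}=\{1,\dots,m\}$. Top-$s$ error: $\mathrm{err}_s(y,g)=1$ if $|\{j\ne y: g_j\ge g_y\}|\ge s$ and $0$ otherwise. A loss $L:\mathcal{Y}\times\mathbb{R}^m\to\mathbb{R}$ is top-$s$ calibrated if for every probability vector $p\in\mathbb{R}^m$ with pairwise distinct coordinates, $\arg\min_{g\in\mathbb{R}^m}\sum_y p_y L(y,g)\subseteq\arg\min_{g\in\mathbb{R}^m}\sum_y p_y\,\mathrm{err}_s(y,g)$ (the left set may be empty). For $k=1$ the loss is the softmax loss. *)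

theory Defs
  imports Complex_Main
begin

text \<open>Classes are the elements of a finite type 'y, with m = CARD('y).
  Score vectors are functions g :: 'y \<Rightarrow> real.\<close>

definition top_err :: "nat \<Rightarrow> 'y::finite \<Rightarrow> ('y \<Rightarrow> real) \<Rightarrow> real" where
  "top_err s y g = (if card {j. j \<noteq> y \<and> g j \<ge> g y} \<ge> s then 1 else 0)"

definition smallest_set :: "nat \<Rightarrow> 'y::finite \<Rightarrow> ('y \<Rightarrow> real) \<Rightarrow> 'y set \<Rightarrow> bool" where
  "smallest_set k y g J \<longleftrightarrow> y \<notin> J \<and> card J = card (UNIV :: 'y set) - k \<and>
     (\<forall>j\<in>J. \<forall>i. i \<noteq> y \<longrightarrow> i \<notin> J \<longrightarrow> g j \<le> g i)"

definition trunc_topk_loss :: "nat \<Rightarrow> 'y::finite \<Rightarrow> ('y \<Rightarrow> real) \<Rightarrow> real" where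
  "trunc_topk_loss k y g =
     ln (1 + (\<Sum>j\<in>(SOME J. smallest_set k y g J). exp (g j - g y)))"

definition argmins :: "('a \<Rightarrow> real) \<Rightarrow> 'a set" where
  "argmins f = {x. \<forall>x'. f x \<le> f x'}"

definition top_calibrated :: "nat \<Rightarrow> ('y::finite \<Rightarrow> ('y \<Rightarrow> real) \<Rightarrow> real) \<Rightarrow> bool" where
  "top_calibrated s L \<longleftrightarrow>
     (\<forall>p :: 'y \<Rightarrow> real. (\<forall>y. p y \<ge> 0) \<and> sum p UNIV = 1 \<and> inj p \<longrightarrow>
        argmins (\<lambda>g. \<Sum>y\<in>UNIV. p y * L y g)
          \<subseteq> argmins (\<lambda>g. \<Sum>y\<in>UNIV. p y * top_err s y g))"

end

theory Submission
  imports Defs "HOL-Combinatorics.Transposition"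
begin

text \<open>The truncated sum in the loss is the minimum of \<open>\<Sum>j\<in>J. exp (g j - g y)\<close> over all sets
  \<open>J \<not>\<ni> y\<close> of size \<open>m - k\<close>. Let \<open>g\<close> minimise the expected loss for a probability vector \<open>p\<close>
  with distinct entries, and let \<open>p i > p j\<close>. If \<open>g i < g j\<close>, exchanging the two scores
  strictly lowers the risk, because the truncated sum of a class strictly decreases when its
  own score grows. If \<open>g i = g j\<close>, the vectors obtained by raising \<open>g i\<close> or \<open>g j\<close> by \<open>t\<close>
  differ by the transposition of \<open>i\<close> and \<open>j\<close>, and the risk of the second exceeds that of the
  first by an amount of first order in \<open>t\<close>; so at a minimiser, raising \<open>g j\<close> costs first order.
  But the risk satisfies the midpoint bound \<open>R(g + t e\<^sub>j) + R(g - t e\<^sub>j) \<le> 2 R(g) + O(t\<^sup>2)\<close>,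
  so at a minimiser raising a single score costs only \<open>O(t\<^sup>2)\<close>. Hence \<open>g\<close> ranks the
  classes exactly as \<open>p\<close> does, and its top-\<open>s\<close> set consists of the \<open>s\<close> most
  likely classes, which minimises the expected top-\<open>s\<close> error.\<close>

lemma sum_le_sum_by_exchange:
  fixes f :: "'a \<Rightarrow> real"
  assumes "finite A" "finite B" "card A \<le> card B"
    and "\<And>b. b \<in> B - A \<Longrightarrow> 0 \<le> f b"
    and "\<And>a b. a \<in> A - B \<Longrightarrow> b \<in> B - A \<Longrightarrow> f a \<le> f b"
  shows "sum f A \<le> sum f B"
proof -
  have "sum f (A - B) \<le> sum f (B - A)"
  proof (cases "A - B = {}")
    case True
    show ?thesis unfolding True using assms(4) by (simp add: sum_nonneg del: Diff_iff)
  next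
    case False
    define M where "M = max 0 (Max (f ` (A - B)))"
    have "card (A - B) \<le> card (B - A)"
      using assms(1-3) by (simp add: card_Diff_subset_Int inf_commute)
    have "sum f (A - B) \<le> card (A - B) * M"
      by (rule sum_bounded_above) (use assms(1) in \<open>auto simp: M_def le_max_iff_disj\<close>)
    also have "\<dots> \<le> card (B - A) * M"
      using \<open>card (A - B) \<le> card (B - A)\<close> by (intro mult_right_mono) (auto simp: M_def)
    also have "\<dots> \<le> sum f (B - A)"
      by (rule sum_bounded_below) (use assms(1,4,5) False in \<open>auto simp: M_def Max_le_iff\<close>)
    finally show ?thesis .
  qed
  moreover have "sum f A = sum f (A \<inter> B) + sum f (A - B)" "sum f B = sum f (A \<inter> B) + sum f (B - A)"
    using sum.Int_Diff[OF assms(1), of f B] sum.Int_Diff[OF assms(2), of f A]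
    by (simp_all only: Int_commute)
  ultimately show ?thesis by linarith
qed

definition tail_sets :: "nat \<Rightarrow> 'y::finite \<Rightarrow> 'y set set" where
  "tail_sets k y = {J. y \<notin> J \<and> card J = card (UNIV :: 'y set) - k}"

definition tail_sum :: "nat \<Rightarrow> 'y::finite \<Rightarrow> ('y \<Rightarrow> real) \<Rightarrow> real" where
  "tail_sum k y g = Min ((\<lambda>J. \<Sum>j\<in>J. exp (g j - g y)) ` tail_sets k y)"

lemma tail_sets_nonempty:
  assumes "1 \<le> k"
  shows "tail_sets k (y::'y::finite) \<noteq> {}"
proof -
  have "card (UNIV :: 'y set) - k \<le> card (UNIV - {y})"
    using assms by (simp add: card_Diff_singleton)
  then obtain J where "J \<subseteq> UNIV - {y}" "card J = card (UNIV :: 'y set) - k"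
    by (rule obtain_subset_with_card_n)
  then show ?thesis unfolding tail_sets_def by auto
qed

lemma tail_sum_le:
  "J \<in> tail_sets k y \<Longrightarrow> tail_sum k y g \<le> (\<Sum>j\<in>J. exp (g j - g y))"
  unfolding tail_sum_def by (rule Min_le) auto

lemma tail_sum_attained:
  assumes "1 \<le> k"
  obtains J where "J \<in> tail_sets k y" "tail_sum k y g = (\<Sum>j\<in>J. exp (g j - g y))"
proof -
  have "tail_sum k y g \<in> (\<lambda>J. \<Sum>j\<in>J. exp (g j - g y)) ` tail_sets k y"
    unfolding tail_sum_def using tail_sets_nonempty[OF assms] by (intro Min_in) auto
  then show ?thesis using that by blast
qed

lemma tail_sum_eq_smallest_set:
  assumes "1 \<le> k" "smallest_set k y g J"
  shows "tail_sum k y g = (\<Sum>j\<in>J. exp (g j - g y))"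
proof (rule antisym)
  show "tail_sum k y g \<le> (\<Sum>j\<in>J. exp (g j - g y))"
    using assms(2) by (intro tail_sum_le) (simp add: smallest_set_def tail_sets_def)
  obtain J' where J': "J' \<in> tail_sets k y" "tail_sum k y g = (\<Sum>j\<in>J'. exp (g j - g y))"
    using tail_sum_attained[OF assms(1)] .
  show "(\<Sum>j\<in>J. exp (g j - g y)) \<le> tail_sum k y g"
    unfolding J'(2)
    by (rule sum_le_sum_by_exchange) (use assms(2) J'(1) in \<open>auto simp: smallest_set_def tail_sets_def\<close>)
qed

lemma smallest_set_exists:
  assumes "1 \<le> k"
  shows "\<exists>J. smallest_set k y g J"
proof -
  obtain J where J: "J \<in> tail_sets k y" and J_min: "tail_sum k y g = (\<Sum>j\<in>J. exp (g j - g y))"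
    using tail_sum_attained[OF assms] .
  have "g j \<le> g i" if "j \<in> J" "i \<noteq> y" "i \<notin> J" for i j
  proof (rule ccontr)
    assume "\<not> g j \<le> g i"
    define J' where "J' = insert i (J - {j})"
    have "card J' = card J"
      unfolding J'_def using that by (cases "card J") (auto simp: card_insert_if card_Diff_singleton)
    then have "J' \<in> tail_sets k y" using J that unfolding J'_def tail_sets_def by auto
    then have "(\<Sum>l\<in>J. exp (g l - g y)) \<le> (\<Sum>l\<in>J'. exp (g l - g y))"
      using tail_sum_le J_min by metis
    also have "\<dots> = (\<Sum>l\<in>J. exp (g l - g y)) - exp (g j - g y) + exp (g i - g y)"
      unfolding J'_def using that by (simp add: sum_diff1)
    finally show False using \<open>\<not> g j \<le> g i\<close> by simp
  qed
  then show ?thesis using J unfolding smallest_set_def tail_sets_def by blast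
qed

lemma trunc_topk_loss_eq_tail_sum:
  assumes "1 \<le> k"
  shows "trunc_topk_loss k y g = ln (1 + tail_sum k y g)"
  using tail_sum_eq_smallest_set[OF assms someI_ex[OF smallest_set_exists[OF assms, of y g]]]
  by (simp add: trunc_topk_loss_def)

lemma tail_sum_nonneg:
  assumes "1 \<le> k"
  shows "0 \<le> tail_sum k y g"
proof -
  obtain J where "tail_sum k y g = (\<Sum>j\<in>J. exp (g j - g y))"
    using tail_sum_attained[OF assms] .
  then show ?thesis by (simp add: sum_nonneg)
qed

lemma tail_sum_pos:
  assumes "1 \<le> k" "k < card (UNIV :: 'y set)"
  shows "0 < tail_sum k (y::'y::finite) g"
proof -
  obtain J where J: "J \<in> tail_sets k y" "tail_sum k y g = (\<Sum>j\<in>J. exp (g j - g y))"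
    using tail_sum_attained[OF assms(1)] .
  then have "J \<noteq> {}" using assms(2) by (auto simp: tail_sets_def)
  then show ?thesis using J(2) by (simp add: sum_pos)
qed

lemma tail_sets_bij_image:
  fixes \<tau> :: "'y::finite \<Rightarrow> 'y"
  assumes "bij \<tau>"
  shows "tail_sets k (\<tau> y) = image \<tau> ` tail_sets k y"
proof -
  have inj: "inj \<tau>" and surj: "surj \<tau>" using assms by (simp_all add: bij_is_inj bij_is_surj)
  have "J = \<tau> ` (\<tau> -` J)" for J using surj by (simp add: surj_image_vimage_eq)
  moreover have "J \<in> tail_sets k (\<tau> y) \<longleftrightarrow> \<tau> -` J \<in> tail_sets k y" for J
    using inj by (simp add: tail_sets_def card_vimage_inj surj)
  moreover have "\<tau> -` (\<tau> ` J) = J" for J using inj by (simp add: inj_vimage_image_eq)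
  ultimately show ?thesis by (metis image_eqI subsetI subset_antisym imageE)
qed

lemma tail_sum_comp_bij:
  fixes \<tau> :: "'y::finite \<Rightarrow> 'y"
  assumes "bij \<tau>"
  shows "tail_sum k y (g \<circ> \<tau>) = tail_sum k (\<tau> y) g"
proof -
  have "(\<Sum>j\<in>\<tau> ` J. exp (g j - g (\<tau> y))) = (\<Sum>j\<in>J. exp ((g \<circ> \<tau>) j - (g \<circ> \<tau>) y))" for J
    using sum.reindex[OF inj_on_subset[OF bij_is_inj[OF assms] subset_UNIV]] by simp
  then show ?thesis
    unfolding tail_sum_def tail_sets_bij_image[OF assms] image_image by simp
qed

lemma tail_sum_shift_own:
  assumes "1 \<le> k"
  shows "tail_sum k y (g(y := g y + t)) = exp (- t) * tail_sum k y g"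
proof -
  have scaled: "(\<Sum>j\<in>J. exp ((g(y := g y + t)) j - (g(y := g y + t)) y))
      = exp (- t) * (\<Sum>j\<in>J. exp (g j - g y))" if "J \<in> tail_sets k y" for J
  proof -
    have "exp ((g(y := g y + t)) j - (g(y := g y + t)) y) = exp (- t) * exp (g j - g y)"
      if "j \<in> J" for j
      using \<open>J \<in> tail_sets k y\<close> that by (auto simp: tail_sets_def mult_exp_exp)
    then show ?thesis by (simp add: sum_distrib_left)
  qed
  have "mono (\<lambda>x::real. exp (- t) * x)" by (rule monoI) simp
  then have "exp (- t) * tail_sum k y g
      = Min ((\<lambda>J. exp (- t) * (\<Sum>j\<in>J. exp (g j - g y))) ` tail_sets k y)"
    unfolding tail_sum_def
    by (subst mono_Min_commute) (auto simp: image_image tail_sets_nonempty[OF assms])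
  also have "\<dots> = tail_sum k y (g(y := g y + t))"
    unfolding tail_sum_def using scaled by (intro arg_cong[where f = Min] image_cong) auto
  finally show ?thesis ..
qed

lemma tail_sum_mono_shift_other:
  assumes "1 \<le> k" "j \<noteq> y" "0 \<le> t"
  shows "tail_sum k y g \<le> tail_sum k y (g(j := g j + t))"
proof -
  obtain J where J: "J \<in> tail_sets k y"
    "tail_sum k y (g(j := g j + t)) = (\<Sum>l\<in>J. exp ((g(j := g j + t)) l - (g(j := g j + t)) y))"
    using tail_sum_attained[OF assms(1)] .
  have "tail_sum k y g \<le> (\<Sum>l\<in>J. exp (g l - g y))" by (rule tail_sum_le[OF J(1)])
  also have "\<dots> \<le> tail_sum k y (g(j := g j + t))"
    unfolding J(2) using assms(2,3) by (intro sum_mono) auto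
  finally show ?thesis .
qed

lemma tail_sum_strict_anti:
  assumes "1 \<le> k" "k < card (UNIV :: 'y set)" "i \<noteq> j" "g i < g j"
  shows "tail_sum k j g < tail_sum k (i::'y::finite) g"
proof -
  obtain J where J: "J \<in> tail_sets k i" "tail_sum k i g = (\<Sum>l\<in>J. exp (g l - g i))"
    using tail_sum_attained[OF assms(1)] .
  have "J \<noteq> {}" using J(1) assms(2) by (auto simp: tail_sets_def)
  show ?thesis
  proof (cases "j \<in> J")
    case False
    then have "tail_sum k j g \<le> (\<Sum>l\<in>J. exp (g l - g j))"
      using J(1) by (intro tail_sum_le) (simp add: tail_sets_def)
    also have "\<dots> < (\<Sum>l\<in>J. exp (g l - g i))"
      using \<open>J \<noteq> {}\<close> assms(4) by (intro sum_strict_mono) auto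
    finally show ?thesis using J(2) by simp
  next
    case True
    define J' where "J' = insert i (J - {j})"
    have "card J' = card J"
      unfolding J'_def using True J(1) by (cases "card J") (auto simp: tail_sets_def card_insert_if)
    then have "tail_sum k j g \<le> (\<Sum>l\<in>J'. exp (g l - g j))"
      using J(1) assms(3) by (intro tail_sum_le) (auto simp: tail_sets_def J'_def)
    also have "\<dots> = (\<Sum>l\<in>J - {j}. exp (g l - g j)) + exp (g i - g j)"
      unfolding J'_def using J(1) by (simp add: tail_sets_def)
    also have "\<dots> < (\<Sum>l\<in>J - {j}. exp (g l - g i)) + exp (g j - g i)"
      using assms(4) by (intro add_le_less_mono sum_mono) auto
    also have "\<dots> = tail_sum k i g" using J(2) True by (simp add: sum_diff1)
    finally show ?thesis .
  qed
qed

lemma ln_shift_midpoint_le: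
  fixes b c t :: real
  assumes "0 < c" "0 \<le> b"
  shows "ln (c + b * exp t) + ln (c + b * exp (- t))
    \<le> 2 * ln (c + b) + (exp t + exp (- t) - 2) / 4"
proof -
  define w where "w = exp t + exp (- t) - 2"
  have "exp t * exp (- t) = 1" by (simp flip: exp_add)
  then have "(exp t - 1)\<^sup>2 * exp (- t) = w"
    unfolding w_def by (simp add: power2_eq_square algebra_simps)
  moreover have "0 \<le> (exp t - 1)\<^sup>2 * exp (- t)" by simp
  ultimately have "0 \<le> w" by simp
  have "0 < c + b" using assms by simp
  define r where "r = c * b * w / (c + b)\<^sup>2"
  have "0 \<le> r" unfolding r_def using assms \<open>0 \<le> w\<close> by simp
  have "(c + b * exp t) * (c + b * exp (- t)) = (c + b)\<^sup>2 + c * b * w"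
    unfolding w_def by (simp add: power2_eq_square algebra_simps flip: exp_add)
  also have "\<dots> = (c + b)\<^sup>2 * (1 + r)"
    unfolding r_def using \<open>0 < c + b\<close> by (simp add: field_simps)
  finally have product: "(c + b * exp t) * (c + b * exp (- t)) = (c + b)\<^sup>2 * (1 + r)" .
  have "r \<le> w / 4"
  proof -
    have "4 * (c * b) \<le> (c + b)\<^sup>2"
      using sum_squares_ge_zero[of "c - b" 0] by (simp add: power2_eq_square algebra_simps)
    then have "4 * (c * b) * w \<le> (c + b)\<^sup>2 * w" using \<open>0 \<le> w\<close> by (rule mult_right_mono)
    then show ?thesis unfolding r_def using \<open>0 < c + b\<close> by (simp add: field_simps)
  qed
  have "ln (c + b * exp t) + ln (c + b * exp (- t)) = ln ((c + b * exp t) * (c + b * exp (- t)))"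
    using assms by (intro ln_mult_pos[symmetric] add_pos_nonneg) simp_all
  also have "\<dots> = ln ((c + b)\<^sup>2) + ln (1 + r)"
    unfolding product using \<open>0 < c + b\<close> \<open>0 \<le> r\<close> by (simp add: ln_mult_pos)
  also have "\<dots> \<le> 2 * ln (c + b) + r"
    using \<open>0 < c + b\<close> ln_le_minus_one[of "1 + r"] \<open>0 \<le> r\<close> by (simp add: ln_realpow)
  finally show ?thesis using \<open>r \<le> w / 4\<close> unfolding w_def by linarith
qed

lemma tail_loss_shift_midpoint_le:
  assumes "1 \<le> k"
  shows "ln (1 + tail_sum k y (g(z := g z + t))) + ln (1 + tail_sum k y (g(z := g z - t)))
    \<le> 2 * ln (1 + tail_sum k y g) + (exp t + exp (- t) - 2) / 4"
proof (cases "y = z")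
  case True
  define X where "X = tail_sum k y g"
  have "0 \<le> X" unfolding X_def by (rule tail_sum_nonneg[OF assms])
  moreover have "tail_sum k y (g(z := g z + t)) = X * exp (- t)"
    "tail_sum k y (g(z := g z - t)) = X * exp t"
    using tail_sum_shift_own[OF assms, of y g t] tail_sum_shift_own[OF assms, of y g "- t"] True
    by (simp_all add: X_def mult.commute)
  ultimately show ?thesis using ln_shift_midpoint_le[of 1 X t] by (simp add: X_def add.commute)
next
  case False
  obtain J where J: "J \<in> tail_sets k y" "tail_sum k y g = (\<Sum>l\<in>J. exp (g l - g y))"
    using tail_sum_attained[OF assms] .
  define a where "a = (\<Sum>l\<in>J - {z}. exp (g l - g y))"
  define b where "b = (\<Sum>l\<in>J \<inter> {z}. exp (g l - g y))"
  have shifted: "(\<Sum>l\<in>J. exp ((g(z := g z + s)) l - (g(z := g z + s)) y)) = a + b * exp s" for s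
  proof -
    have "(\<Sum>l\<in>J - {z}. exp ((g(z := g z + s)) l - (g(z := g z + s)) y)) = a"
      unfolding a_def using False by (intro sum.cong) auto
    moreover have "(\<Sum>l\<in>J \<inter> {z}. exp ((g(z := g z + s)) l - (g(z := g z + s)) y)) = b * exp s"
      unfolding b_def using False by (auto simp: sum_distrib_right mult_exp_exp intro!: sum.cong)
    ultimately show ?thesis using sum.Int_Diff[of J _ "{z}"] by (metis add.commute finite)
  qed
  have bound: "ln (1 + tail_sum k y (g(z := g z + s))) \<le> ln ((1 + a) + b * exp s)" for s
    using tail_sum_le[OF J(1), of "g(z := g z + s)"] tail_sum_nonneg[OF assms, of y "g(z := g z + s)"]
    unfolding shifted by (simp add: add.assoc)
  have "tail_sum k y g = a + b" using J(2) shifted[of 0] by simp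
  moreover have "0 \<le> a" "0 \<le> b" unfolding a_def b_def by (simp_all add: sum_nonneg)
  ultimately show ?thesis
    using ln_shift_midpoint_le[of "1 + a" b t] bound[of t] bound[of "- t"] by (simp add: add.assoc)
qed

definition risk :: "nat \<Rightarrow> ('y::finite \<Rightarrow> real) \<Rightarrow> ('y \<Rightarrow> real) \<Rightarrow> real" where
  "risk k p g = (\<Sum>y\<in>UNIV. p y * ln (1 + tail_sum k y g))"

lemma risk_shift_midpoint_le:
  assumes "1 \<le> k" "\<And>y. 0 \<le> p y" "sum p UNIV = 1"
  shows "risk k p (g(z := g z + t)) + risk k p (g(z := g z - t))
    \<le> 2 * risk k p g + (exp t + exp (- t) - 2) / 4"
proof -
  define q where "q = (exp t + exp (- t) - 2) / 4"
  have "risk k p (g(z := g z + t)) + risk k p (g(z := g z - t))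
      = (\<Sum>y\<in>UNIV. p y * (ln (1 + tail_sum k y (g(z := g z + t)))
                          + ln (1 + tail_sum k y (g(z := g z - t)))))"
    by (simp add: risk_def sum.distrib distrib_left)
  also have "\<dots> \<le> (\<Sum>y\<in>UNIV. p y * (2 * ln (1 + tail_sum k y g) + q))"
    by (intro sum_mono mult_left_mono assms(2)
        tail_loss_shift_midpoint_le[OF assms(1), where g = g and z = z and t = t, folded q_def])
  also have "\<dots> = 2 * risk k p g + q"
    using assms(3) by (simp add: risk_def distrib_left sum.distrib mult.left_commute[of "p _" 2]
        flip: sum_distrib_left sum_distrib_right)
  finally show ?thesis unfolding q_def .
qed

lemma risk_comp_transpose:
  "risk k p (g \<circ> transpose a b) - risk k p g
    = (p a - p b) * (ln (1 + tail_sum k b g) - ln (1 + tail_sum k a g))"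
proof -
  define L where "L x = ln (1 + tail_sum k x g)" for x
  have "risk k p (g \<circ> transpose a b) = (\<Sum>y\<in>UNIV. p (transpose a b (transpose a b y)) * L (transpose a b y))"
    by (simp add: risk_def L_def tail_sum_comp_bij)
  also have "\<dots> = (\<Sum>x\<in>UNIV. p (transpose a b x) * L x)"
    by (rule sum.reindex_bij_betw) simp
  finally have "risk k p (g \<circ> transpose a b) - risk k p g
      = (\<Sum>x\<in>UNIV. (p (transpose a b x) - p x) * L x)"
    by (simp add: risk_def L_def sum_subtractf left_diff_distrib)
  also have "\<dots> = (\<Sum>x\<in>{a, b}. (p (transpose a b x) - p x) * L x)"
    by (rule sum.mono_neutral_right) auto
  also have "\<dots> = (p a - p b) * (L b - L a)"
    by (cases "a = b") (simp_all add: algebra_simps)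
  finally show ?thesis unfolding L_def .
qed

lemma exists_shift_gain_exceeds_curvature:
  fixes c X :: real
  assumes "0 < c" "0 < X"
  shows "\<exists>t>0. (exp t + exp (- t) - 2) / 4 < c * (ln (1 + X) - ln (1 + exp (- t) * X))"
proof -
  define f where "f t = c * (ln (1 + X) - ln (1 + exp (- t) * X)) - (exp t + exp (- t) - 2) / 4"
    for t
  have "(f has_real_derivative c * X / (1 + X)) (at 0)"
    unfolding f_def using assms by (auto intro!: derivative_eq_intros simp: field_simps)
  moreover have "0 < c * X / (1 + X)" using assms by simp
  ultimately obtain d where "0 < d" and "\<And>h. 0 < h \<Longrightarrow> h < d \<Longrightarrow> f 0 < f (0 + h)"
    by (blast dest: DERIV_pos_inc_right)
  then have "0 < d / 2" "f 0 < f (d / 2)" by simp_all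
  moreover have "f 0 = 0" unfolding f_def by simp
  ultimately show ?thesis unfolding f_def by (intro exI[of _ "d / 2"]) auto
qed

locale risk_minimizer =
  fixes k :: nat and p g :: "'y::finite \<Rightarrow> real"
  assumes k_pos: "1 \<le> k" and k_less: "k < card (UNIV :: 'y set)"
    and p_nonneg: "\<And>y. 0 \<le> p y" and p_sum: "sum p UNIV = 1"
    and minimal: "\<And>g'. risk k p g \<le> risk k p g'"
begin

lemma score_mono:
  assumes "p j < p i"
  shows "g j \<le> g i"
proof (rule ccontr)
  assume "\<not> g j \<le> g i"
  then have "tail_sum k j g < tail_sum k i g"
    using assms by (intro tail_sum_strict_anti k_pos k_less) auto
  then have "ln (1 + tail_sum k j g) < ln (1 + tail_sum k i g)"
    using tail_sum_nonneg[OF k_pos, of j g] by simp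
  then have "(p i - p j) * (ln (1 + tail_sum k j g) - ln (1 + tail_sum k i g)) < 0"
    using assms by (intro mult_pos_neg) simp_all
  then have "risk k p (g \<circ> transpose i j) < risk k p g"
    using risk_comp_transpose[of k p g i j] by linarith
  then show False using minimal[of "g \<circ> transpose i j"] by simp
qed

lemma no_score_tie:
  assumes "p j < p i"
  shows "g i \<noteq> g j"
proof
  assume tie: "g i = g j"
  have "i \<noteq> j" using assms by auto
  define X where "X = tail_sum k i g"
  define c where "c = p i - p j"
  have "0 < X" unfolding X_def by (rule tail_sum_pos[OF k_pos k_less])
  have "0 < c" unfolding c_def using assms by simp
  obtain t where "0 < t"
    and gain: "(exp t + exp (- t) - 2) / 4 < c * (ln (1 + X) - ln (1 + exp (- t) * X))"
    using exists_shift_gain_exceeds_curvature[OF \<open>0 < c\<close> \<open>0 < X\<close>] by blast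
  define G where "G = g(i := g i + t)"
  have raise_j: "g(j := g j + t) = G \<circ> transpose i j"
    unfolding G_def using tie \<open>i \<noteq> j\<close> by (auto simp: fun_eq_iff transpose_def)
  have "g \<circ> transpose i j = g" using tie by (auto simp: fun_eq_iff transpose_def)
  then have "tail_sum k j g = X"
    using tail_sum_comp_bij[of "transpose i j" k i g] by (simp add: X_def)
  then have "ln (1 + X) \<le> ln (1 + tail_sum k j G)"
    using tail_sum_mono_shift_other[OF k_pos, of i j t g] \<open>i \<noteq> j\<close> \<open>0 < t\<close> \<open>0 < X\<close>
    by (simp add: G_def)
  moreover have "tail_sum k i G = exp (- t) * X"
    unfolding G_def X_def by (rule tail_sum_shift_own[OF k_pos])
  ultimately have "c * (ln (1 + X) - ln (1 + exp (- t) * X))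
      \<le> risk k p (g(j := g j + t)) - risk k p G"
    unfolding raise_j risk_comp_transpose c_def[symmetric] using \<open>0 < c\<close>
    by (intro mult_left_mono) simp_all
  moreover have "risk k p (g(j := g j + t)) \<le> risk k p g + (exp t + exp (- t) - 2) / 4"
    using risk_shift_midpoint_le[OF k_pos p_nonneg p_sum, of g j t] minimal[of "g(j := g j - t)"]
    by linarith
  moreover have "risk k p g \<le> risk k p G" by (rule minimal)
  ultimately show False using gain by linarith
qed

lemma score_le_iff:
  assumes "inj p" "i \<noteq> j"
  shows "g i \<le> g j \<longleftrightarrow> p i \<le> p j"
proof -
  have "p i \<noteq> p j" using assms by (auto dest: injD)
  then consider "p i < p j" | "p j < p i" by linarith
  then show ?thesis
  proof cases
    case 1
    then show ?thesis using score_mono[of i j] by simp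
  next
    case 2
    then show ?thesis using score_mono[of j i] no_score_tie[of j i] by auto
  qed
qed

end

definition top_set :: "nat \<Rightarrow> ('y::finite \<Rightarrow> real) \<Rightarrow> 'y set" where
  "top_set s h = {y. card {j. j \<noteq> y \<and> h y \<le> h j} < s}"

lemma expected_top_err_eq:
  fixes p :: "'y::finite \<Rightarrow> real"
  assumes "sum p UNIV = 1"
  shows "(\<Sum>y\<in>UNIV. p y * top_err s y h) = 1 - sum p (top_set s h)"
proof -
  have "(\<Sum>y\<in>UNIV. p y * top_err s y h) = (\<Sum>y\<in>UNIV. if y \<in> top_set s h then 0 else p y)"
    by (intro sum.cong) (auto simp: top_err_def top_set_def)
  also have "\<dots> = sum p UNIV - sum p (top_set s h)"
    by (simp add: sum.If_cases Compl_eq_Diff_UNIV sum_diff)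
  finally show ?thesis using assms by simp
qed

lemma top_set_eq_UNIV:
  assumes "card (UNIV :: 'y set) \<le> s"
  shows "top_set s (h :: 'y::finite \<Rightarrow> real) = UNIV"
proof -
  have "card {j. j \<noteq> y \<and> h y \<le> h j} < s" for y
  proof -
    have "card {j. j \<noteq> y \<and> h y \<le> h j} \<le> card (UNIV - {y})" by (intro card_mono) auto
    also have "\<dots> < card (UNIV :: 'y set)" by (rule card_Diff1_less) simp_all
    finally show ?thesis using assms by simp
  qed
  then show ?thesis by (simp add: top_set_def)
qed

lemma top_set_cong:
  assumes "\<And>i j. i \<noteq> j \<Longrightarrow> g i \<le> g j \<longleftrightarrow> h i \<le> h j"
  shows "top_set s g = top_set s h"
proof -
  have "{j. j \<noteq> y \<and> g y \<le> g j} = {j. j \<noteq> y \<and> h y \<le> h j}" for y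
    by (rule Collect_cong) (use assms[of y] in fastforce)
  then show ?thesis by (simp add: top_set_def)
qed

lemma card_top_set_le: "card (top_set s h) \<le> s"
proof (rule ccontr)
  assume "\<not> card (top_set s h) \<le> s"
  then have "top_set s h \<noteq> {}" by auto
  then have "Min (h ` top_set s h) \<in> h ` top_set s h" by (intro Min_in) auto
  then obtain y where y: "y \<in> top_set s h" "h y = Min (h ` top_set s h)" by auto
  have "top_set s h - {y} \<subseteq> {j. j \<noteq> y \<and> h y \<le> h j}" using y by auto
  then have "card (top_set s h - {y}) \<le> card {j. j \<noteq> y \<and> h y \<le> h j}"
    by (intro card_mono) simp_all
  moreover have "card (top_set s h - {y}) = card (top_set s h) - 1"
    using y(1) by (simp add: card_Diff_singleton)
  ultimately have "s \<le> card {j. j \<noteq> y \<and> h y \<le> h j}"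
    using \<open>\<not> card (top_set s h) \<le> s\<close> by linarith
  then show False using y(1) by (simp add: top_set_def)
qed

lemma top_set_separates:
  fixes p :: "'y::finite \<Rightarrow> real"
  assumes "inj p" "z \<in> top_set s p" "x \<notin> top_set s p"
  shows "p x < p z"
proof (rule ccontr)
  assume "\<not> p x < p z"
  moreover have "p x \<noteq> p z" using assms by (auto dest: injD)
  ultimately have "p z < p x" by simp
  then have "insert x {j. j \<noteq> x \<and> p x \<le> p j} \<subseteq> {j. j \<noteq> z \<and> p z \<le> p j}" by auto
  then have "card (insert x {j. j \<noteq> x \<and> p x \<le> p j}) \<le> card {j. j \<noteq> z \<and> p z \<le> p j}"
    by (intro card_mono) simp_all
  then have "Suc (card {j. j \<noteq> x \<and> p x \<le> p j}) \<le> card {j. j \<noteq> z \<and> p z \<le> p j}"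
    by simp
  then show False using assms(2,3) by (simp add: top_set_def)
qed

lemma card_top_set_ge:
  fixes p :: "'y::finite \<Rightarrow> real"
  assumes "inj p" "s \<le> card (UNIV :: 'y set)"
  shows "s \<le> card (top_set s p)"
proof (rule ccontr)
  assume small: "\<not> s \<le> card (top_set s p)"
  have "UNIV - top_set s p \<noteq> {}"
  proof
    assume "UNIV - top_set s p = {}"
    then have "top_set s p = UNIV" by auto
    then show False using small assms(2) by simp
  qed
  then have "Max (p ` (UNIV - top_set s p)) \<in> p ` (UNIV - top_set s p)" by (intro Max_in) auto
  then obtain x where x: "x \<notin> top_set s p" "p x = Max (p ` (UNIV - top_set s p))" by auto
  have "{j. j \<noteq> x \<and> p x \<le> p j} \<subseteq> top_set s p"
  proof
    fix j assume j: "j \<in> {j. j \<noteq> x \<and> p x \<le> p j}"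
    show "j \<in> top_set s p"
    proof (rule ccontr)
      assume "j \<notin> top_set s p"
      then have "p j = p x" using x j by (simp add: antisym)
      then show False using j assms(1) by (auto dest: injD)
    qed
  qed
  then have "card {j. j \<noteq> x \<and> p x \<le> p j} \<le> card (top_set s p)"
    by (intro card_mono) simp_all
  then show False using x(1) small by (simp add: top_set_def)
qed

lemma sum_le_sum_top_set:
  fixes p :: "'y::finite \<Rightarrow> real"
  assumes "inj p" "\<And>y. 0 \<le> p y" "s \<le> card (UNIV :: 'y set)" "card A \<le> s"
  shows "sum p A \<le> sum p (top_set s p)"
proof (rule sum_le_sum_by_exchange)
  show "card A \<le> card (top_set s p)" using assms(4) card_top_set_ge[OF assms(1,3)] by simp
  show "p a \<le> p b" if "a \<in> A - top_set s p" "b \<in> top_set s p - A" for a b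
    using top_set_separates[OF assms(1), of b s a] that by simp
qed (simp_all add: assms(2))

theorem proposition9:
  fixes k s :: nat
  assumes "card (UNIV :: 'y::finite set) \<ge> 2"
    and "1 \<le> k" and "k \<le> card (UNIV :: 'y set)"
    and "k \<le> s" and "s \<le> card (UNIV :: 'y set)"
  shows "top_calibrated s (trunc_topk_loss k :: 'y \<Rightarrow> ('y \<Rightarrow> real) \<Rightarrow> real)"
  unfolding top_calibrated_def
proof (intro allI impI subsetI)
  fix p :: "'y \<Rightarrow> real" and g
  assume "(\<forall>y. 0 \<le> p y) \<and> sum p UNIV = 1 \<and> inj p"
  then have p_nonneg: "\<And>y. 0 \<le> p y" and p_sum: "sum p UNIV = 1" and p_inj: "inj p" by auto
  assume "g \<in> argmins (\<lambda>g. \<Sum>y\<in>UNIV. p y * trunc_topk_loss k y g)"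
  then have g_min: "risk k p g \<le> risk k p g'" for g'
    by (simp add: argmins_def risk_def trunc_topk_loss_eq_tail_sum[OF assms(2)])
  have "top_set s g = top_set s p"
  proof (cases "k < card (UNIV :: 'y set)")
    case True
    then interpret risk_minimizer k p g
      using assms(2) p_nonneg p_sum g_min by unfold_locales
    show ?thesis by (rule top_set_cong) (rule score_le_iff[OF p_inj])
  next
    case False
    then show ?thesis using assms(3,4) by (simp add: top_set_eq_UNIV)
  qed
  then show "g \<in> argmins (\<lambda>g. \<Sum>y\<in>UNIV. p y * top_err s y g)"
    using sum_le_sum_top_set[OF p_inj p_nonneg assms(5) card_top_set_le]
    by (simp add: argmins_def expected_top_err_eq[OF p_sum])
qed

end
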